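(* Consider the Cannings model described in the context and suppose $\lim_{N\to\infty}c_N=0$. Then for all $\varepsilon>0$, $$\lim_{N\to\infty}\frac{N^2}{c_N}\,\mathbb{P}\Big(\Big|\frac{\nu_{k,N}}{N}-\frac{X_{k,N}}{S_N}\Big|>\varepsilon\text{ for some }k\in[N]\Big)=0.$$
   Context: Cannings model with i.i.d. offspring numbers and sampling: for each $N$, let $X_{1,N},\dots,X_{N,N}$ be i.i.d. random variables with values in $\{1,2,\dots\}$, and $S_N=X_{1,N}+\cdots+X_{N,N}$. Conditionally on these, $N$ of the $S_N$ offspring are sampled uniformly without replacement to form the next generation, and $\nu_{k,N}$ is the number of sampled offspring of the $k$th individual. $(x)_k$ is the falling factorial and $c_N=E[(\nu_{1,N})_2]/(N-1)$. *)

theory Defs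
  imports "HOL-Probability.Probability"
begin

text \<open>Offspring of the current generation (individuals indexed 0..N-1), labelled by
  pairs (k, j): the j-th child of individual k, for j < x k.\<close>
definition offspring :: "nat \<Rightarrow> (nat \<Rightarrow> nat) \<Rightarrow> (nat \<times> nat) set" where
  "offspring N x = {(k, j). k < N \<and> j < x k}"

text \<open>Joint law of (X_{.,N}, nu_{.,N}) for the Cannings model with i.i.d. offspring
  numbers of law q: X_0,...,X_{N-1} i.i.d. with law q; then N of the S_N offspring are
  sampled uniformly without replacement, and nu_k counts sampled children of individual k.\<close>
definition cannings :: "nat pmf \<Rightarrow> nat \<Rightarrow> ((nat \<Rightarrow> nat) \<times> (nat \<Rightarrow> nat)) pmf" where
  "cannings q N =
     bind_pmf (Pi_pmf {..<N} 0 (\<lambda>_. q))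
       (\<lambda>x. map_pmf (\<lambda>T. (x, \<lambda>k. card {j. (k, j) \<in> T}))
              (pmf_of_set {T. T \<subseteq> offspring N x \<and> card T = N}))"

definition coal_prob :: "nat pmf \<Rightarrow> nat \<Rightarrow> real" where
  "coal_prob q N =
     measure_pmf.expectation (cannings q N)
        (\<lambda>(x, v). real (v 0) * (real (v 0) - 1)) / (real N - 1)"

end

theory Submission
  imports Defs "HOL-Real_Asymp.Real_Asymp"
begin

text \<open>Conditionally on the offspring numbers \<open>X\<close>, the sample is uniform among the
  \<open>N\<close>-subsets of the \<open>S\<^sub>N\<close> offspring, so each \<open>\<nu>\<^sub>k\<close> is hypergeometric. Its exponential
  moments are dominated by binomial ones, and Chernoff's method gives
  \<open>|\<nu>\<^sub>k/N - X\<^sub>k/S\<^sub>N| \<le> \<epsilon>\<close> outside probability \<open>2 exp(-\<epsilon>\<^sup>2N/4)\<close> for each \<open>k\<close>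
  (when \<open>\<epsilon> \<le> 1\<close>). If all \<open>X\<^sub>k = 1\<close>, the sample is the whole offspring and no
  deviation occurs, so the probability
  in question is at most \<open>2N exp(-\<epsilon>\<^sup>2N/4) P(X \<noteq> 1)\<close>. On the other hand, by
  exchangeability \<open>c\<^sub>N = E[\<Sum>\<^sub>k (X\<^sub>k)\<^sub>2 / (S\<^sub>N)\<^sub>2]\<close>, and Cauchy-Schwarz shows that this sum is
  at least \<open>1/N\<^sup>2\<close> as soon as some \<open>X\<^sub>k \<ge> 2\<close>; hence \<open>c\<^sub>N \<ge> P(X \<noteq> 1)/N\<^sup>2\<close>. Altogether
  \<open>N\<^sup>2/c\<^sub>N\<close> times the probability is at most \<open>2N\<^sup>5 exp(-\<epsilon>\<^sup>2N/4)\<close>, which tends to 0.\<close>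

section \<open>Uniformly random subsets of a fixed size\<close>

lemma card_subsets_containing:
  assumes U: "finite U" and A: "A \<subseteq> U" "card A \<le> N"
  shows "card {T. T \<subseteq> U \<and> card T = N \<and> A \<subseteq> T} = (card U - card A) choose (N - card A)"
proof -
  have fA: "finite A" using A U finite_subset by blast
  have "bij_betw (\<lambda>T. T - A) {T. T \<subseteq> U \<and> card T = N \<and> A \<subseteq> T}
          {R. R \<subseteq> U - A \<and> card R = N - card A}"
  proof (rule bij_betw_byWitness[where f' = "\<lambda>R. R \<union> A"])
    show "(\<lambda>R. R \<union> A) ` {R. R \<subseteq> U - A \<and> card R = N - card A}
            \<subseteq> {T. T \<subseteq> U \<and> card T = N \<and> A \<subseteq> T}"
    proof clarify
      fix R assume R: "R \<subseteq> U - A" "card R = N - card A"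
      then have "finite R" using U finite_subset by blast
      with R A fA show "R \<union> A \<subseteq> U \<and> card (R \<union> A) = N \<and> A \<subseteq> R \<union> A"
        by (subst card_Un_disjoint) auto
    qed
  qed (use fA in \<open>auto simp: card_Diff_subset\<close>)
  then have "card {T. T \<subseteq> U \<and> card T = N \<and> A \<subseteq> T} = card {R. R \<subseteq> U - A \<and> card R = N - card A}"
    by (rule bij_betw_same_card)
  also have "\<dots> = (card U - card A) choose (N - card A)"
    using U A fA by (simp add: n_subsets card_Diff_subset)
  finally show ?thesis .
qed

lemma choose_diff_le:
  fixes m N S :: nat
  assumes "m \<le> N" "N \<le> S"
  shows "real ((S - m) choose (N - m)) \<le> real (S choose N) * (real N / real S) ^ m"
  using assms(1)
proof (induction m)
  case (Suc m)
  have S: "0 < S - m" "m < N" using Suc assms by auto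
  have "(N - m) * ((S - m) choose (N - m)) = (S - m) * ((S - Suc m) choose (N - Suc m))"
    using times_binomial_minus1_eq[of "N - m" "S - m"] S by simp
  then have step: "real (N - m) * real ((S - m) choose (N - m))
      = real (S - m) * real ((S - Suc m) choose (N - Suc m))"
    by (metis of_nat_mult)
  have "real N * real m \<le> real S * real m"
    using assms by (intro mult_right_mono) auto
  then have ratio: "real (N - m) / real (S - m) \<le> real N / real S"
    using S assms by (simp add: field_simps)
  have "real ((S - Suc m) choose (N - Suc m)) = real (N - m) / real (S - m) * real ((S - m) choose (N - m))"
    using step S by (simp add: field_simps)
  also have "\<dots> \<le> real N / real S * (real (S choose N) * (real N / real S) ^ m)"
    using Suc ratio by (intro mult_mono) auto
  finally show ?case by (simp add: algebra_simps)
qed simp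

lemma card_subsets_containing_le:
  assumes U: "finite U" and A: "A \<subseteq> U" and N: "N \<le> card U"
  shows "real (card {T. T \<subseteq> U \<and> card T = N \<and> A \<subseteq> T})
           \<le> real (card U choose N) * (real N / real (card U)) ^ card A"
proof (cases "card A \<le> N")
  case True
  then show ?thesis using card_subsets_containing[OF U A True] choose_diff_le[OF True N] by simp
next
  case False
  have "card A \<le> card T" if "T \<subseteq> U" "A \<subseteq> T" for T
    using that U by (meson card_mono finite_subset)
  with False have empty: "{T. T \<subseteq> U \<and> card T = N \<and> A \<subseteq> T} = {}"
    by auto
  show ?thesis unfolding empty by simp
qed

lemma power_card_eq_sum_Pow:
  fixes z :: "'a :: comm_semiring_1"
  assumes "finite X"
  shows "(1 + z) ^ card X = (\<Sum>A\<in>Pow X. z ^ card A)"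
  using prod_add[OF assms, of "\<lambda>_. z" "\<lambda>_. 1"] by (simp add: add.commute)

text \<open>The exponential moments of a hypergeometric variable are at most the binomial ones.\<close>

lemma sum_power_card_Int_le:
  fixes z :: real
  assumes U: "finite U" and B: "B \<subseteq> U" and N: "N \<le> card U" and z: "0 \<le> z"
  shows "(\<Sum>T | T \<subseteq> U \<and> card T = N. (1 + z) ^ card (T \<inter> B))
           \<le> real (card U choose N) * exp (z * real N * real (card B) / real (card U))"
proof -
  define S where "S = card U"
  have fB: "finite B" using B U finite_subset by blast
  have fin: "finite {T. T \<subseteq> U \<and> card T = N}" using U by simp
  have "(\<Sum>T | T \<subseteq> U \<and> card T = N. (1 + z) ^ card (T \<inter> B))
      = (\<Sum>T | T \<subseteq> U \<and> card T = N. \<Sum>A\<in>Pow B. if A \<subseteq> T then z ^ card A else 0)"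
  proof (rule sum.cong[OF refl])
    fix T
    have "(1 + z) ^ card (T \<inter> B) = (\<Sum>A\<in>Pow (T \<inter> B). z ^ card A)"
      using fB by (simp add: power_card_eq_sum_Pow)
    also have "Pow (T \<inter> B) = {A \<in> Pow B. A \<subseteq> T}" by auto
    also have "(\<Sum>A\<in>{A \<in> Pow B. A \<subseteq> T}. z ^ card A) = (\<Sum>A\<in>Pow B. if A \<subseteq> T then z ^ card A else 0)"
      by (rule sum.inter_filter) (use fB in simp)
    finally show "(1 + z) ^ card (T \<inter> B) = (\<Sum>A\<in>Pow B. if A \<subseteq> T then z ^ card A else 0)" .
  qed
  also have "\<dots> = (\<Sum>A\<in>Pow B. z ^ card A * real (card {T. T \<subseteq> U \<and> card T = N \<and> A \<subseteq> T}))"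
    by (subst sum.swap) (simp add: sum.If_cases fin Int_def mult.commute)
  also have "\<dots> \<le> (\<Sum>A\<in>Pow B. z ^ card A * (real (S choose N) * (real N / real S) ^ card A))"
    using card_subsets_containing_le[OF U _ N] B z unfolding S_def
    by (intro sum_mono mult_left_mono) auto
  also have "\<dots> = real (S choose N) * (1 + z * real N / real S) ^ card B"
    by (simp add: power_card_eq_sum_Pow[OF fB] sum_distrib_left
        power_divide algebra_simps)
  also have "\<dots> \<le> real (S choose N) * exp (z * real N / real S) ^ card B"
    using z by (intro mult_left_mono power_mono) auto
  finally show ?thesis by (simp add: S_def mult_ac flip: exp_of_nat_mult)
qed

lemma card_subsets_Int_excess_le:
  assumes U: "finite U" and B: "B \<subseteq> U" and N: "0 < N" "N \<le> card U"
    and \<epsilon>: "0 < \<epsilon>" "\<epsilon> \<le> 1"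
  shows "real (card {T. T \<subseteq> U \<and> card T = N \<and>
            real (card (T \<inter> B)) / real N - real (card B) / real (card U) > \<epsilon>})
         \<le> exp (- (\<epsilon>\<^sup>2 * real N / 4)) * real (card U choose N)"
proof -
  define l where "l = \<epsilon> / 2"
  define z where "z = exp l - 1"
  define \<mu> where "\<mu> = real N * real (card B) / real (card U)"
  define Bad where "Bad = {T. T \<subseteq> U \<and> card T = N \<and>
            real (card (T \<inter> B)) / real N - real (card B) / real (card U) > \<epsilon>}"
  have l: "0 \<le> l" "l \<le> 1" using \<epsilon> unfolding l_def by auto
  have z: "0 \<le> z" "z \<le> l + l\<^sup>2"
    using l exp_bound[OF l] unfolding z_def by auto
  have \<mu>: "0 \<le> \<mu>" "\<mu> \<le> real N"
    using card_mono[OF U B] N unfolding \<mu>_def by (auto simp: divide_simps)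
  have "exp (l * (\<mu> + \<epsilon> * real N)) \<le> (1 + z) ^ card (T \<inter> B)" if "T \<in> Bad" for T
  proof -
    have "\<epsilon> * real N < (real (card (T \<inter> B)) / real N - real (card B) / real (card U)) * real N"
      using that N unfolding Bad_def by (intro mult_strict_right_mono) auto
    moreover have "(real (card (T \<inter> B)) / real N - real (card B) / real (card U)) * real N
        = real (card (T \<inter> B)) - \<mu>"
      using N unfolding \<mu>_def by (simp add: field_simps)
    ultimately have "\<mu> + \<epsilon> * real N < real (card (T \<inter> B))"
      by linarith
    then have "exp (l * (\<mu> + \<epsilon> * real N)) \<le> exp (l * real (card (T \<inter> B)))"
      using l by (simp add: mult_left_mono)
    then show ?thesis by (simp add: z_def mult.commute flip: exp_of_nat_mult)
  qed
  then have "real (card Bad) * exp (l * (\<mu> + \<epsilon> * real N)) \<le> (\<Sum>T\<in>Bad. (1 + z) ^ card (T \<inter> B))"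
    using sum_mono[of Bad "\<lambda>_. exp (l * (\<mu> + \<epsilon> * real N))"] by simp
  also have "\<dots> \<le> (\<Sum>T | T \<subseteq> U \<and> card T = N. (1 + z) ^ card (T \<inter> B))"
    using U z by (intro sum_mono2) (auto simp: Bad_def)
  also have "\<dots> \<le> real (card U choose N) * exp (z * \<mu>)"
    using sum_power_card_Int_le[OF U B N(2) z(1)] by (simp add: \<mu>_def mult.assoc)
  finally have "real (card Bad) \<le> real (card U choose N) * exp (z * \<mu> - l * (\<mu> + \<epsilon> * real N))"
    by (simp add: exp_diff pos_le_divide_eq)
  also have "\<dots> \<le> real (card U choose N) * exp (- (\<epsilon>\<^sup>2 * real N / 4))"
  proof -
    have "z * \<mu> \<le> l * \<mu> + l\<^sup>2 * \<mu>" "l\<^sup>2 * \<mu> \<le> l\<^sup>2 * real N"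
      using z \<mu> mult_right_mono[OF z(2) \<mu>(1)] by (auto simp: distrib_right intro: mult_left_mono)
    then have "z * \<mu> - l * (\<mu> + \<epsilon> * real N) \<le> l\<^sup>2 * real N - l * \<epsilon> * real N"
      by (simp add: distrib_left)
    also have "\<dots> = - (\<epsilon>\<^sup>2 * real N / 4)"
      unfolding l_def by (simp add: power2_eq_square algebra_simps)
    finally show ?thesis by (intro mult_left_mono) auto
  qed
  finally show ?thesis
    unfolding Bad_def by (simp add: mult.commute)
qed

lemma card_subsets_Int_deviation_le:
  assumes U: "finite U" and B: "B \<subseteq> U" and N: "0 < N" "N \<le> card U"
    and \<epsilon>: "0 < \<epsilon>" "\<epsilon> \<le> 1"
  shows "real (card {T. T \<subseteq> U \<and> card T = N \<and>
            \<bar>real (card (T \<inter> B)) / real N - real (card B) / real (card U)\<bar> > \<epsilon>})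
         \<le> 2 * exp (- (\<epsilon>\<^sup>2 * real N / 4)) * real (card U choose N)"
proof -
  \<comment> \<open>A downward deviation within \<open>B\<close> is an upward deviation within \<open>U - B\<close>.\<close>
  define excess where "excess C = {T. T \<subseteq> U \<and> card T = N \<and>
            real (card (T \<inter> C)) / real N - real (card C) / real (card U) > \<epsilon>}" for C
  have "T \<in> excess B \<union> excess (U - B)"
    if T: "T \<subseteq> U" "card T = N"
      and dev: "\<bar>real (card (T \<inter> B)) / real N - real (card B) / real (card U)\<bar> > \<epsilon>" for T
  proof -
    have fin: "finite T" "finite B" using T B U finite_subset by blast+
    have "T \<inter> (U - B) = T - T \<inter> B" using T by auto
    then have "card (T \<inter> (U - B)) = N - card (T \<inter> B)" "card (U - B) = card U - card B"
      using T B fin by (simp_all add: card_Diff_subset)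
    moreover have "card (T \<inter> B) \<le> N" "card B \<le> card U"
      using T B U fin by (auto intro: card_mono)
    ultimately have "real (card (T \<inter> (U - B))) / real N = 1 - real (card (T \<inter> B)) / real N"
        "real (card (U - B)) / real (card U) = 1 - real (card B) / real (card U)"
      using N by (simp_all add: diff_divide_distrib)
    then show ?thesis using T dev unfolding excess_def by auto
  qed
  then have "{T. T \<subseteq> U \<and> card T = N \<and>
            \<bar>real (card (T \<inter> B)) / real N - real (card B) / real (card U)\<bar> > \<epsilon>}
        \<subseteq> excess B \<union> excess (U - B)"
    by blast
  then have "card {T. T \<subseteq> U \<and> card T = N \<and>
            \<bar>real (card (T \<inter> B)) / real N - real (card B) / real (card U)\<bar> > \<epsilon>}
        \<le> card (excess B \<union> excess (U - B))"
    using U by (intro card_mono) (auto simp: excess_def)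
  also have "\<dots> \<le> card (excess B) + card (excess (U - B))"
    by (rule card_Un_le)
  finally have "real (card {T. T \<subseteq> U \<and> card T = N \<and>
            \<bar>real (card (T \<inter> B)) / real N - real (card B) / real (card U)\<bar> > \<epsilon>})
        \<le> real (card (excess B)) + real (card (excess (U - B)))"
    unfolding of_nat_add[symmetric] of_nat_le_iff .
  moreover have excess_le: "real (card (excess C)) \<le> exp (- (\<epsilon>\<^sup>2 * real N / 4)) * real (card U choose N)"
    if "C \<subseteq> U" for C
    unfolding excess_def using card_subsets_Int_excess_le[OF U that N \<epsilon>] .
  ultimately show ?thesis using excess_le[OF B] excess_le[OF Diff_subset[of U B]] by linarith
qed

section \<open>Sampling the next generation\<close>

definition samples :: "nat \<Rightarrow> (nat \<Rightarrow> nat) \<Rightarrow> (nat \<times> nat) set set" where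
  "samples N x = {T. T \<subseteq> offspring N x \<and> card T = N}"

definition sampled :: "(nat \<times> nat) set \<Rightarrow> nat \<Rightarrow> nat" where
  "sampled T k = card {j. (k, j) \<in> T}"

lemma offspring_eq_Sigma: "offspring N x = (SIGMA k:{..<N}. {..<x k})"
  unfolding offspring_def by auto

lemma finite_offspring [simp]: "finite (offspring N x)"
  unfolding offspring_eq_Sigma by auto

lemma card_offspring: "card (offspring N x) = (\<Sum>k<N. x k)"
  unfolding offspring_eq_Sigma by simp

lemma children_subset_offspring: "k < N \<Longrightarrow> {k} \<times> {..<x k} \<subseteq> offspring N x"
  unfolding offspring_def by auto

lemma sampled_eq_card_Int:
  assumes "T \<subseteq> offspring N x"
  shows "sampled T k = card (T \<inter> {k} \<times> {..<x k})"
proof -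
  have "T \<inter> {k} \<times> {..<x k} = Pair k ` {j. (k, j) \<in> T}"
    using assms unfolding offspring_def by auto
  then show ?thesis unfolding sampled_def by (simp add: card_image inj_on_def)
qed

lemma sampled_le:
  assumes "T \<in> samples N x"
  shows "sampled T k \<le> N"
proof -
  have T: "T \<subseteq> offspring N x" "card T = N" using assms by (auto simp: samples_def)
  have "finite T" using finite_subset[OF T(1) finite_offspring] .
  have "sampled T k = card (T \<inter> {k} \<times> {..<x k})" by (rule sampled_eq_card_Int[OF T(1)])
  also have "\<dots> \<le> card T" using \<open>finite T\<close> by (rule card_mono) auto
  finally show ?thesis using T by simp
qed

lemma finite_samples [simp]: "finite (samples N x)"
  unfolding samples_def by simp

lemma card_samples: "card (samples N x) = (\<Sum>k<N. x k) choose N"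
  unfolding samples_def by (simp add: n_subsets card_offspring)

lemma card_samples_containing:
  assumes "A \<subseteq> offspring N x" "card A \<le> N"
  shows "card {T \<in> samples N x. A \<subseteq> T} = ((\<Sum>i<N. x i) - card A) choose (N - card A)"
proof -
  have "{T \<in> samples N x. A \<subseteq> T} = {T. T \<subseteq> offspring N x \<and> card T = N \<and> A \<subseteq> T}"
    unfolding samples_def by auto
  then show ?thesis
    using card_subsets_containing[OF finite_offspring assms] by (simp add: card_offspring)
qed

lemma samples_nonempty: "N \<le> (\<Sum>k<N. x k) \<Longrightarrow> samples N x \<noteq> {}"
  using card_samples[of N x] by fastforce

lemma prob_sampled_deviation_le:
  assumes N: "0 < N" "N \<le> (\<Sum>i<N. x i)" and \<epsilon>: "0 < \<epsilon>" "\<epsilon> \<le> 1"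
  shows "measure_pmf.prob (pmf_of_set (samples N x))
           {T. \<exists>k<N. \<bar>real (sampled T k) / real N - real (x k) / real (\<Sum>i<N. x i)\<bar> > \<epsilon>}
         \<le> 2 * real N * exp (- (\<epsilon>\<^sup>2 * real N / 4))"
proof -
  define U where "U = offspring N x"
  define E where "E = 2 * exp (- (\<epsilon>\<^sup>2 * real N / 4)) * real (card U choose N)"
  define dev where "dev k = {T. T \<subseteq> U \<and> card T = N \<and>
      \<bar>real (card (T \<inter> {k} \<times> {..<x k})) / real N - real (card ({k} \<times> {..<x k})) / real (card U)\<bar> > \<epsilon>}"
    for k
  have U: "finite U" "card U = (\<Sum>i<N. x i)" unfolding U_def by (simp_all add: card_offspring)
  have NU: "N \<le> card U" using N U by simp
  have dev_le: "real (card (dev k)) \<le> E" if "k < N" for k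
    using card_subsets_Int_deviation_le[OF U(1) _ N(1) NU \<epsilon>] children_subset_offspring[OF that]
    unfolding dev_def E_def U_def by blast
  define Dev where "Dev = {T. \<exists>k<N. \<bar>real (sampled T k) / real N - real (x k) / real (\<Sum>i<N. x i)\<bar> > \<epsilon>}"
  have "samples N x \<inter> Dev \<subseteq> (\<Union>k<N. dev k)"
  proof
    fix T assume "T \<in> samples N x \<inter> Dev"
    then obtain k where "T \<in> samples N x" "k < N"
      and "\<bar>real (sampled T k) / real N - real (x k) / real (\<Sum>i<N. x i)\<bar> > \<epsilon>"
      unfolding Dev_def by blast
    then show "T \<in> (\<Union>k<N. dev k)"
      using sampled_eq_card_Int[of T N x k] U unfolding samples_def dev_def U_def by auto
  qed
  then have "card (samples N x \<inter> Dev) \<le> (\<Sum>k<N. card (dev k))"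
    using U(1) by (intro order_trans[OF card_mono card_UN_le]) (auto simp: dev_def)
  then have "real (card (samples N x \<inter> Dev)) \<le> (\<Sum>k<N. real (card (dev k)))"
    by (metis of_nat_le_iff of_nat_sum)
  also have "\<dots> \<le> real N * E"
    using sum_mono[of "{..<N}" "\<lambda>k. real (card (dev k))" "\<lambda>_. E"] dev_le by simp
  finally have "real (card (samples N x \<inter> Dev)) / real (card (samples N x)) \<le> real N * E / real (card U choose N)"
    by (simp add: card_samples U divide_right_mono)
  also have "\<dots> = 2 * real N * exp (- (\<epsilon>\<^sup>2 * real N / 4))"
    using NU by (simp add: E_def)
  finally show ?thesis
    using samples_nonempty[OF N(2)] by (simp add: measure_pmf_of_set Dev_def)
qed

definition falling2 :: "nat \<Rightarrow> real" where
  "falling2 n = real n * (real n - 1)"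

lemma of_nat_mult_pred_eq_falling2: "real (n * (n - 1)) = falling2 n"
  by (cases n) (auto simp: falling2_def algebra_simps)

lemma falling2_nonneg: "0 \<le> falling2 n"
  by (cases n) (auto simp: falling2_def)

lemma falling2_mono: "m \<le> n \<Longrightarrow> falling2 m \<le> falling2 n"
  using falling2_nonneg[of n] by (cases m) (auto simp: falling2_def intro!: mult_mono)

lemma falling2_ratio_le_1: "m \<le> n \<Longrightarrow> falling2 m / falling2 n \<le> 1"
  using falling2_mono[of m n] falling2_nonneg[of n] by (smt (verit) divide_le_eq_1)

lemma card_distinct_pairs:
  assumes "finite X"
  shows "card {(a, b). a \<in> X \<and> b \<in> X \<and> a \<noteq> b} = card X * (card X - 1)"
proof -
  have "{(a, b). a \<in> X \<and> b \<in> X \<and> a \<noteq> b} = X \<times> X - (\<lambda>a. (a, a)) ` X" by auto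
  moreover have "card ((\<lambda>a. (a, a)) ` X) = card X" by (simp add: card_image inj_on_def)
  moreover have "(\<lambda>a. (a, a)) ` X \<subseteq> X \<times> X" by auto
  ultimately show ?thesis
    using assms by (simp add: card_Diff_subset card_cartesian_product diff_mult_distrib2)
qed

lemma sum_sampled_pairs:
  assumes k: "k < N" and N: "2 \<le> N"
  shows "(\<Sum>T\<in>samples N x. sampled T k * (sampled T k - 1))
           = x k * (x k - 1) * (((\<Sum>i<N. x i) - 2) choose (N - 2))"
proof -
  define C where "C = {k} \<times> {..<x k}"
  define P where "P = {(a, b). a \<in> C \<and> b \<in> C \<and> a \<noteq> b}"
  have C: "finite C" "C \<subseteq> offspring N x" "card C = x k"
    using children_subset_offspring[OF k] unfolding C_def by (auto simp: card_cartesian_product)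
  have "P \<subseteq> C \<times> C" unfolding P_def by auto
  then have fP: "finite P" using C(1) by (simp add: finite_subset)
  have "sampled T k * (sampled T k - 1) = card {p \<in> P. fst p \<in> T \<and> snd p \<in> T}"
    if "T \<in> samples N x" for T
  proof -
    have "finite (T \<inter> C)" using C(1) by simp
    moreover have "{(a, b). a \<in> T \<inter> C \<and> b \<in> T \<inter> C \<and> a \<noteq> b} = {p \<in> P. fst p \<in> T \<and> snd p \<in> T}"
      unfolding P_def by auto
    ultimately show ?thesis
      using that card_distinct_pairs[of "T \<inter> C"] sampled_eq_card_Int[of T N x k]
      by (simp add: samples_def C_def)
  qed
  then have "(\<Sum>T\<in>samples N x. sampled T k * (sampled T k - 1))
      = (\<Sum>T\<in>samples N x. \<Sum>p\<in>P. if fst p \<in> T \<and> snd p \<in> T then 1 else 0)"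
    using fP by (simp add: sum.If_cases Int_def)
  also have "\<dots> = (\<Sum>p\<in>P. card {T \<in> samples N x. {fst p, snd p} \<subseteq> T})"
    by (subst sum.swap) (simp add: sum.If_cases Int_def)
  also have "\<dots> = (\<Sum>p\<in>P. ((\<Sum>i<N. x i) - 2) choose (N - 2))"
  proof (rule sum.cong[OF refl])
    fix p assume "p \<in> P"
    then obtain a b where "p = (a, b)" "a \<in> C" "b \<in> C" "a \<noteq> b" unfolding P_def by auto
    then have "{fst p, snd p} \<subseteq> offspring N x" "card {fst p, snd p} = 2"
      using C(2) by auto
    then show "card {T \<in> samples N x. {fst p, snd p} \<subseteq> T} = ((\<Sum>i<N. x i) - 2) choose (N - 2)"
      using card_samples_containing[of "{fst p, snd p}" N x] N by simp
  qed
  also have "\<dots> = x k * (x k - 1) * (((\<Sum>i<N. x i) - 2) choose (N - 2))"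
    using card_distinct_pairs[OF C(1)] C(3) by (simp add: P_def)
  finally show ?thesis .
qed

lemma times_binomial_minus2_eq:
  assumes "2 \<le> N" "N \<le> S"
  shows "N * (N - 1) * (S choose N) = S * (S - 1) * ((S - 2) choose (N - 2))"
proof -
  have "N * (S choose N) = S * ((S - 1) choose (N - 1))"
    "(N - 1) * ((S - 1) choose (N - 1)) = (S - 1) * ((S - 2) choose (N - 2))"
    using times_binomial_minus1_eq[of N S] times_binomial_minus1_eq[of "N - 1" "S - 1"] assms
    by (simp_all add: numeral_2_eq_2)
  then show ?thesis by (metis mult.assoc mult.left_commute)
qed

lemma expectation_sampled_pairs:
  assumes k: "k < N" and N: "2 \<le> N" "N \<le> (\<Sum>i<N. x i)"
  shows "measure_pmf.expectation (pmf_of_set (samples N x)) (\<lambda>T. falling2 (sampled T k))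
       = falling2 N * falling2 (x k) / falling2 (\<Sum>i<N. x i)"
proof -
  define S where "S = (\<Sum>i<N. x i)"
  have S: "2 \<le> S" "N \<le> S" using N by (simp_all add: S_def)
  have "measure_pmf.expectation (pmf_of_set (samples N x)) (\<lambda>T. falling2 (sampled T k))
      = (\<Sum>T\<in>samples N x. falling2 (sampled T k)) / real (S choose N)"
    using samples_nonempty[OF N(2)] by (simp add: integral_pmf_of_set card_samples S_def)
  also have "\<dots> = falling2 (x k) * real ((S - 2) choose (N - 2)) / real (S choose N)"
    unfolding of_nat_mult_pred_eq_falling2[symmetric] of_nat_sum[symmetric] sum_sampled_pairs[OF k N(1)] S_def
    by simp
  also have "real ((S - 2) choose (N - 2)) = falling2 N * real (S choose N) / falling2 S"
  proof -
    have "falling2 N * real (S choose N) = falling2 S * real ((S - 2) choose (N - 2))"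
      using arg_cong[OF times_binomial_minus2_eq[OF N(1) S(2)], of real] by (metis of_nat_mult of_nat_mult_pred_eq_falling2)
    then show ?thesis using S by (simp add: eq_divide_eq falling2_def)
  qed
  finally show ?thesis
    using S by (simp add: S_def falling2_def)
qed

lemma integral_bind_pmf_bounded:
  fixes g :: "'b \<Rightarrow> real"
  assumes bnd: "\<And>x y. x \<in> set_pmf M \<Longrightarrow> y \<in> set_pmf (f x) \<Longrightarrow> \<bar>g y\<bar> \<le> B"
  shows "measure_pmf.expectation (bind_pmf M f) g
           = measure_pmf.expectation M (\<lambda>x. measure_pmf.expectation (f x) g)"
proof -
  define g' where "g' y = max (- \<bar>B\<bar>) (min \<bar>B\<bar> (g y))" for y
  have g': "\<bar>g' y\<bar> \<le> \<bar>B\<bar>" for y unfolding g'_def by auto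
  have eq: "g y = g' y" if "x \<in> set_pmf M" "y \<in> set_pmf (f x)" for x y
    using bnd[OF that] unfolding g'_def by auto
  have "measure_pmf.expectation (bind_pmf M f) g = measure_pmf.expectation (bind_pmf M f) g'"
    by (rule integral_cong_AE) (auto simp: AE_measure_pmf_iff eq)
  also have "\<dots> = measure_pmf.expectation M (\<lambda>x. measure_pmf.expectation (f x) g')"
    unfolding measure_pmf_bind
    by (rule integral_bind[where K = "count_space UNIV" and B = "\<bar>B\<bar>" and B' = 1])
       (auto simp: g' measure_pmf.emeasure_space_1 space_subprob_algebra subprob_space_measure_pmf)
  also have "\<dots> = measure_pmf.expectation M (\<lambda>x. measure_pmf.expectation (f x) g)"
    by (rule integral_cong_AE) (auto simp: AE_measure_pmf_iff eq intro!: integral_cong_AE)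
  finally show ?thesis .
qed

lemma prob_bind_pmf:
  "measure_pmf.prob (bind_pmf M f) A = measure_pmf.expectation M (\<lambda>x. measure_pmf.prob (f x) A)"
  using integral_bind_pmf_bounded[of M f "indicator A" 1] by (simp add: indicator_def)

lemma integrable_measure_pmf_bounded:
  fixes f :: "'a \<Rightarrow> real"
  assumes "\<And>x. x \<in> set_pmf M \<Longrightarrow> \<bar>f x\<bar> \<le> B"
  shows "integrable (measure_pmf M) f"
  by (rule measure_pmf.integrable_const_bound[where B = B]) (auto simp: AE_measure_pmf_iff assms)

lemma set_Pi_pmf_iid:
  fixes N :: nat
  assumes "x \<in> set_pmf (Pi_pmf {..<N} 0 (\<lambda>_. q))" "k < N"
  shows "x k \<in> set_pmf q"
  using assms by (auto simp: set_Pi_pmf PiE_dflt_def)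

lemma le_sum_if_set_Pi_pmf:
  fixes N :: nat
  assumes q: "set_pmf q \<subseteq> {1..}" and x: "x \<in> set_pmf (Pi_pmf {..<N} 0 (\<lambda>_. q))"
  shows "N \<le> (\<Sum>i<N. x i)"
proof -
  have "1 \<le> x k" if "k < N" for k
    using set_Pi_pmf_iid[OF x that] q by auto
  then show ?thesis
    using sum_mono[of "{..<N}" "\<lambda>_. 1::nat" x] by simp
qed

lemma integral_Pi_pmf_swap:
  fixes G :: "nat \<Rightarrow> nat \<Rightarrow> real" and k N :: nat
  assumes k: "k < N"
  shows "measure_pmf.expectation (Pi_pmf {..<N} 0 (\<lambda>_. q)) (\<lambda>x. G (x 0) (\<Sum>i<N. x i))
       = measure_pmf.expectation (Pi_pmf {..<N} 0 (\<lambda>_. q)) (\<lambda>x. G (x k) (\<Sum>i<N. x i))"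
proof -
  define h where "h = Transposition.transpose 0 k"
  have bij: "bij_betw h {..<N} {..<N}"
    using k by (intro bij_betw_byWitness[where f' = h]) (auto simp: h_def Transposition.transpose_def)
  have Pi_eq: "Pi_pmf {..<N} 0 (\<lambda>_. q) = map_pmf (\<lambda>x. x \<circ> h) (Pi_pmf {..<N} 0 (\<lambda>_. q))"
    by (rule Pi_pmf_bij_betw[OF _ bij]) (use k in \<open>auto simp: h_def Transposition.transpose_def\<close>)
  have "measure_pmf.expectation (Pi_pmf {..<N} 0 (\<lambda>_. q)) (\<lambda>x. G (x 0) (\<Sum>i<N. x i))
      = measure_pmf.expectation (map_pmf (\<lambda>x. x \<circ> h) (Pi_pmf {..<N} 0 (\<lambda>_. q)))
          (\<lambda>x. G (x 0) (\<Sum>i<N. x i))"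
    by (simp only: Pi_eq[symmetric])
  also have "\<dots> = measure_pmf.expectation (Pi_pmf {..<N} 0 (\<lambda>_. q)) (\<lambda>x. G (x (h 0)) (\<Sum>i<N. x (h i)))"
    by simp
  also have "\<dots> = measure_pmf.expectation (Pi_pmf {..<N} 0 (\<lambda>_. q)) (\<lambda>x. G (x k) (\<Sum>i<N. x i))"
  proof -
    have "(\<Sum>i<N. x (h i)) = (\<Sum>i<N. x i)" for x :: "nat \<Rightarrow> nat"
      using sum.reindex_bij_betw[OF bij, of x] .
    then show ?thesis by (simp add: h_def)
  qed
  finally show ?thesis .
qed

section \<open>The Cannings model\<close>

lemma cannings_eq_bind_samples:
  "cannings q N = bind_pmf (Pi_pmf {..<N} 0 (\<lambda>_. q))
       (\<lambda>x. map_pmf (\<lambda>T. (x, sampled T)) (pmf_of_set (samples N x)))"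
  unfolding cannings_def samples_def sampled_def[abs_def] ..

lemma sampled_eq_1_if_all_1:
  assumes "\<forall>i<N. x i = 1" "T \<in> samples N x" "k < N"
  shows "sampled T k = 1"
proof -
  have "card (offspring N x) = N"
    using assms(1) by (simp add: card_offspring)
  then have "T = offspring N x"
    using assms(2) unfolding samples_def by (intro card_subset_eq) auto
  moreover have "{j. (k, j) \<in> offspring N x} = {0}"
    using assms unfolding offspring_def by auto
  ultimately show ?thesis unfolding sampled_def by simp
qed

lemma prob_sampled_deviation_le_indicator:
  assumes N: "0 < N" "N \<le> (\<Sum>i<N. x i)" and \<epsilon>: "0 < \<epsilon>"
  shows "measure_pmf.prob (pmf_of_set (samples N x))
           {T. \<exists>k<N. \<bar>real (sampled T k) / real N - real (x k) / real (\<Sum>i<N. x i)\<bar> > \<epsilon>}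
         \<le> 2 * real N * exp (- ((min \<epsilon> 1)\<^sup>2 * real N / 4)) * indicator {x. \<exists>k<N. x k \<noteq> 1} x"
proof (cases "\<forall>k<N. x k = 1")
  case True
  then have "samples N x \<inter>
      {T. \<exists>k<N. \<bar>real (sampled T k) / real N - real (x k) / real (\<Sum>i<N. x i)\<bar> > \<epsilon>} = {}"
    using sampled_eq_1_if_all_1[OF True] \<epsilon> by auto
  then show ?thesis
    using samples_nonempty[OF N(2)] by (simp add: measure_pmf_of_set)
next
  case False
  have "measure_pmf.prob (pmf_of_set (samples N x))
           {T. \<exists>k<N. \<bar>real (sampled T k) / real N - real (x k) / real (\<Sum>i<N. x i)\<bar> > \<epsilon>}
      \<le> measure_pmf.prob (pmf_of_set (samples N x))
          {T. \<exists>k<N. \<bar>real (sampled T k) / real N - real (x k) / real (\<Sum>i<N. x i)\<bar> > min \<epsilon> 1}"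
    by (intro measure_pmf.finite_measure_mono) auto
  also have "\<dots> \<le> 2 * real N * exp (- ((min \<epsilon> 1)\<^sup>2 * real N / 4))"
    by (rule prob_sampled_deviation_le) (use N \<epsilon> in auto)
  finally show ?thesis using False by simp
qed

lemma prob_cannings_deviation_le:
  assumes q: "set_pmf q \<subseteq> {1..}" and N: "0 < N" and \<epsilon>: "0 < \<epsilon>"
  shows "measure_pmf.prob (cannings q N)
           {(x, v). \<exists>k<N. \<bar>real (v k) / real N - real (x k) / real (\<Sum>i<N. x i)\<bar> > \<epsilon>}
         \<le> 2 * real N * exp (- ((min \<epsilon> 1)\<^sup>2 * real N / 4)) *
           measure_pmf.prob (Pi_pmf {..<N} 0 (\<lambda>_. q)) {x. \<exists>k<N. x k \<noteq> 1}"
proof -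
  define M where "M = Pi_pmf {..<N} 0 (\<lambda>_. q)"
  define c where "c = 2 * real N * exp (- ((min \<epsilon> 1)\<^sup>2 * real N / 4))"
  define Dev where "Dev x = {T. \<exists>k<N. \<bar>real (sampled T k) / real N - real (x k) / real (\<Sum>i<N. x i)\<bar> > \<epsilon>}"
    for x :: "nat \<Rightarrow> nat"
  have "measure_pmf.prob (cannings q N)
           {(x, v). \<exists>k<N. \<bar>real (v k) / real N - real (x k) / real (\<Sum>i<N. x i)\<bar> > \<epsilon>}
      = measure_pmf.expectation M (\<lambda>x. measure_pmf.prob (pmf_of_set (samples N x)) (Dev x))"
    unfolding cannings_eq_bind_samples prob_bind_pmf M_def by (simp add: Dev_def vimage_def)
  also have "\<dots> \<le> measure_pmf.expectation M (\<lambda>x. c * indicator {x. \<exists>k<N. x k \<noteq> 1} x)"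
  proof (rule integral_mono_AE)
    show "integrable M (\<lambda>x. measure_pmf.prob (pmf_of_set (samples N x)) (Dev x))"
      by (rule integrable_measure_pmf_bounded[where B = 1]) simp
    show "integrable M (\<lambda>x. c * indicator {x. \<exists>k<N. x k \<noteq> 1} x)"
      by (rule integrable_measure_pmf_bounded[where B = c]) (simp add: c_def indicator_def)
    show "AE x in M. measure_pmf.prob (pmf_of_set (samples N x)) (Dev x)
        \<le> c * indicator {x. \<exists>k<N. x k \<noteq> 1} x"
      using prob_sampled_deviation_le_indicator[OF N le_sum_if_set_Pi_pmf[OF q] \<epsilon>]
      by (simp add: AE_measure_pmf_iff M_def Dev_def c_def)
  qed
  finally show ?thesis by (simp add: M_def c_def)
qed

lemma sum_falling2_ratio_ge:
  fixes x :: "nat \<Rightarrow> nat"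
  assumes N: "2 \<le> N" and x1: "\<forall>k<N. 1 \<le> x k" and not_all_1: "\<exists>k<N. x k \<noteq> 1"
  shows "1 / real N ^ 2 \<le> (\<Sum>k<N. falling2 (x k)) / falling2 (\<Sum>i<N. x i)"
proof -
  define s where "s = real (\<Sum>i<N. x i)"
  define n where "n = real N"
  define Q where "Q = (\<Sum>k<N. real (x k) ^ 2)"
  obtain k0 where k0: "k0 < N" "2 \<le> x k0" using not_all_1 x1 by force
  have "N + 1 \<le> (\<Sum>i<N. x i)"
  proof -
    have "(\<Sum>i<N. x i) = x k0 + (\<Sum>i\<in>{..<N} - {k0}. x i)"
      using k0 by (simp add: sum.remove)
    moreover have "N - 1 \<le> (\<Sum>i\<in>{..<N} - {k0}. x i)"
      using sum_mono[of "{..<N} - {k0}" "\<lambda>_. 1::nat" x] x1 k0 by simp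
    ultimately show ?thesis using k0 N by linarith
  qed
  then have sn: "n + 1 \<le> s" unfolding s_def n_def by (metis of_nat_1 of_nat_add of_nat_le_iff)
  have n: "2 \<le> n" unfolding n_def using N by simp
  have CS: "s\<^sup>2 \<le> n * Q"
    using sum_squared_le_sum_of_squares[of "\<lambda>k. real (x k)" "{..<N}"]
    unfolding s_def Q_def n_def by (simp add: mult.commute)
  have sum_eq: "(\<Sum>k<N. falling2 (x k)) = Q - s"
    unfolding Q_def s_def falling2_def by (simp add: algebra_simps power2_eq_square sum_subtractf)
  have "s * (s - 1) \<le> n\<^sup>2 * (Q - s)"
  proof -
    have "0 \<le> (n - 1) * (s - n - 1)" using sn n by simp
    then have "s - 1 \<le> n * (s - n)" by (simp add: algebra_simps)
    then have "s * (s - 1) \<le> s * (n * (s - n))" using sn n by (intro mult_left_mono) auto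
    also have "\<dots> = n * s * (s - n)" by simp
    also have "\<dots> \<le> n\<^sup>2 * (Q - s)"
      using mult_left_mono[OF CS, of n] n by (simp add: power2_eq_square algebra_simps)
    finally show ?thesis .
  qed
  moreover have "0 < s * (s - 1)" "0 < n\<^sup>2" using sn n by simp_all
  ultimately have "1 / n\<^sup>2 \<le> (Q - s) / (s * (s - 1))"
    by (simp add: pos_le_divide_eq pos_divide_le_eq mult.commute)
  then show ?thesis
    unfolding sum_eq by (simp add: falling2_def s_def n_def)
qed

lemma expectation_falling2_cannings:
  assumes q: "set_pmf q \<subseteq> {1..}" and k: "k < N" and N: "2 \<le> N"
  shows "measure_pmf.expectation (cannings q N) (\<lambda>(x, v). falling2 (v k))
       = falling2 N * measure_pmf.expectation (Pi_pmf {..<N} 0 (\<lambda>_. q))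
           (\<lambda>x. falling2 (x k) / falling2 (\<Sum>i<N. x i))"
proof -
  define M where "M = Pi_pmf {..<N} 0 (\<lambda>_. q)"
  have support: "N \<le> (\<Sum>i<N. x i)" "samples N x \<noteq> {}" if "x \<in> set_pmf M" for x
    using le_sum_if_set_Pi_pmf[OF q that[unfolded M_def]] samples_nonempty by auto
  have "\<bar>falling2 (snd y k)\<bar> \<le> falling2 N"
    if x: "x \<in> set_pmf M" and y: "y \<in> set_pmf (map_pmf (\<lambda>T. (x, sampled T)) (pmf_of_set (samples N x)))"
    for x y
  proof -
    obtain T where "T \<in> samples N x" "y = (x, sampled T)" using y support[OF x] by auto
    then show ?thesis using falling2_mono[OF sampled_le] falling2_nonneg by simp
  qed
  then have "measure_pmf.expectation (cannings q N) (\<lambda>(x, v). falling2 (v k))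
      = measure_pmf.expectation M (\<lambda>x. measure_pmf.expectation (pmf_of_set (samples N x))
          (\<lambda>T. falling2 (sampled T k)))"
    unfolding cannings_eq_bind_samples M_def
    by (subst integral_bind_pmf_bounded[where B = "falling2 N"]) (auto simp: split_beta)
  also have "\<dots> = measure_pmf.expectation M (\<lambda>x. falling2 N * (falling2 (x k) / falling2 (\<Sum>i<N. x i)))"
    using k N support
    by (intro integral_cong_AE) (auto simp: AE_measure_pmf_iff expectation_sampled_pairs)
  finally show ?thesis unfolding M_def by (simp only: integral_mult_right_zero)
qed

lemma coal_prob_eq:
  assumes q: "set_pmf q \<subseteq> {1..}" and N: "2 \<le> N"
  shows "coal_prob q N = measure_pmf.expectation (Pi_pmf {..<N} 0 (\<lambda>_. q))
           (\<lambda>x. \<Sum>k<N. falling2 (x k) / falling2 (\<Sum>i<N. x i))"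
proof -
  define M where "M = Pi_pmf {..<N} 0 (\<lambda>_. q)"
  define ratio where "ratio k x = falling2 (x k) / falling2 (\<Sum>i<N. x i)" for k and x :: "nat \<Rightarrow> nat"
  have "coal_prob q N = real N * measure_pmf.expectation M (ratio 0)"
    using expectation_falling2_cannings[OF q _ N, of 0] N
    by (simp add: coal_prob_def falling2_def[abs_def] split_beta' M_def ratio_def[abs_def])
  also have "\<dots> = (\<Sum>k<N. measure_pmf.expectation M (ratio k))"
  proof -
    have swap: "measure_pmf.expectation M (ratio k) = measure_pmf.expectation M (ratio 0)" if "k < N" for k
      unfolding M_def ratio_def
      using integral_Pi_pmf_swap[OF that, where G = "\<lambda>a s. falling2 a / falling2 s" and q = q] by (rule sym)
    have "(\<Sum>k<N. measure_pmf.expectation M (ratio k)) = (\<Sum>k<N. measure_pmf.expectation M (ratio 0))"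
      by (rule sum.cong[OF refl], rule swap, simp)
    then show ?thesis by simp
  qed
  also have "\<dots> = measure_pmf.expectation M (\<lambda>x. \<Sum>k<N. ratio k x)"
  proof (intro Bochner_Integration.integral_sum[symmetric] integrable_measure_pmf_bounded[where B = 1])
    fix k x assume "k \<in> {..<N}"
    then show "\<bar>ratio k x\<bar> \<le> 1"
      using falling2_ratio_le_1[OF member_le_sum, of k "{..<N}" x] falling2_nonneg
      unfolding ratio_def by simp
  qed
  finally show ?thesis unfolding M_def ratio_def .
qed

lemma coal_prob_ge:
  assumes q: "set_pmf q \<subseteq> {1..}" and N: "2 \<le> N"
  shows "measure_pmf.prob (Pi_pmf {..<N} 0 (\<lambda>_. q)) {x. \<exists>k<N. x k \<noteq> 1} / real N ^ 2 \<le> coal_prob q N"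
proof -
  define M where "M = Pi_pmf {..<N} 0 (\<lambda>_. q)"
  define f where "f x = (\<Sum>k<N. falling2 (x k) / falling2 (\<Sum>i<N. x i))" for x :: "nat \<Rightarrow> nat"
  have f: "0 \<le> f x" "f x \<le> real N" for x
  proof -
    have "0 \<le> falling2 (x k) / falling2 (\<Sum>i<N. x i)" "falling2 (x k) / falling2 (\<Sum>i<N. x i) \<le> 1"
      if "k < N" for k
      using falling2_nonneg falling2_ratio_le_1[OF member_le_sum, of k "{..<N}" x] that by auto
    then show "0 \<le> f x" "f x \<le> real N"
      unfolding f_def
      using sum_bounded_above[of "{..<N}" "\<lambda>k. falling2 (x k) / falling2 (\<Sum>i<N. x i)" 1]
      by (auto intro: sum_nonneg)
  qed
  have "measure_pmf.prob M {x. \<exists>k<N. x k \<noteq> 1} / real N ^ 2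
      = measure_pmf.expectation M (\<lambda>x. indicator {x. \<exists>k<N. x k \<noteq> 1} x / real N ^ 2)"
    by simp
  also have "\<dots> \<le> measure_pmf.expectation M f"
  proof (rule integral_mono_AE)
    show "integrable M (\<lambda>x. indicator {x. \<exists>k<N. x k \<noteq> 1} x / real N ^ 2)"
      using N by (intro integrable_measure_pmf_bounded[where B = 1]) (auto simp: indicator_def)
    show "integrable M f"
      using f by (intro integrable_measure_pmf_bounded[where B = "real N"]) auto
    show "AE x in M. indicator {x. \<exists>k<N. x k \<noteq> 1} x / real N ^ 2 \<le> f x"
      unfolding AE_measure_pmf_iff
    proof
      fix x assume x: "x \<in> set_pmf M"
      show "indicator {x. \<exists>k<N. x k \<noteq> 1} x / real N ^ 2 \<le> f x"
      proof (cases "\<exists>k<N. x k \<noteq> 1")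
        case True
        have "1 \<le> x k" if "k < N" for k
          using set_Pi_pmf_iid[OF x[unfolded M_def] that] q by auto
        then show ?thesis
          using sum_falling2_ratio_ge[OF N _ True] True by (simp add: f_def sum_divide_distrib)
      next
        case False
        then show ?thesis using f(1) by simp
      qed
    qed
  qed
  finally show ?thesis using coal_prob_eq[OF q N] unfolding M_def f_def by simp
qed

lemma scaled_deviation_prob_le:
  assumes q: "set_pmf q \<subseteq> {1..}" and N: "2 \<le> N" and \<epsilon>: "0 < \<epsilon>"
  defines "P \<equiv> measure_pmf.prob (cannings q N)
              {(x, v). \<exists>k<N. \<bar>real (v k) / real N - real (x k) / real (\<Sum>i<N. x i)\<bar> > \<epsilon>}"
  shows "0 \<le> real N ^ 2 / coal_prob q N * P"
    and "real N ^ 2 / coal_prob q N * P \<le> 2 * real N ^ 5 * exp (- ((min \<epsilon> 1)\<^sup>2 / 4) * real N)"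
proof -
  define K where "K = 2 * real N * exp (- ((min \<epsilon> 1)\<^sup>2 * real N / 4))"
  define p1 where "p1 = measure_pmf.prob (Pi_pmf {..<N} 0 (\<lambda>_. q)) {x. \<exists>k<N. x k \<noteq> 1}"
  have P: "P \<le> K * p1"
    unfolding P_def K_def p1_def using N by (intro prob_cannings_deviation_le[OF q _ \<epsilon>]) simp
  have c: "p1 \<le> real N ^ 2 * coal_prob q N"
    using coal_prob_ge[OF q N] N unfolding p1_def by (simp add: divide_le_eq mult.commute)
  moreover have "0 \<le> p1" unfolding p1_def by simp
  ultimately have "0 \<le> real N ^ 2 * coal_prob q N" by linarith
  then have c0: "0 \<le> coal_prob q N"
    using N by (simp add: zero_le_mult_iff)
  show "0 \<le> real N ^ 2 / coal_prob q N * P"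
    using c0 by (simp add: P_def)
  \<comment> \<open>This includes the case \<open>coal_prob q N = 0\<close>, where division yields 0.\<close>
  have "p1 / coal_prob q N \<le> real N ^ 2"
    using c c0 by (cases "coal_prob q N = 0") (simp_all add: pos_divide_le_eq)
  have "real N ^ 2 / coal_prob q N * P \<le> real N ^ 2 / coal_prob q N * (K * p1)"
    using P c0 by (intro mult_left_mono) auto
  also have "\<dots> = real N ^ 2 * K * (p1 / coal_prob q N)"
    by simp
  also have "\<dots> \<le> real N ^ 2 * K * real N ^ 2"
    using \<open>p1 / coal_prob q N \<le> real N ^ 2\<close> by (intro mult_left_mono) (auto simp: K_def)
  finally show "real N ^ 2 / coal_prob q N * P \<le> 2 * real N ^ 5 * exp (- ((min \<epsilon> 1)\<^sup>2 / 4) * real N)"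
    by (simp add: K_def power_numeral_reduce algebra_simps)
qed

theorem lemma2p4:
  fixes p :: "nat \<Rightarrow> nat pmf"
  assumes pos: "\<And>N. set_pmf (p N) \<subseteq> {1..}"
    and cN: "(\<lambda>N. coal_prob (p N) N) \<longlonglongrightarrow> 0"
  shows "\<forall>\<epsilon>>0. (\<lambda>N. real N ^ 2 / coal_prob (p N) N *
            measure_pmf.prob (cannings (p N) N)
              {(x, v). \<exists>k<N. \<bar>real (v k) / real N - real (x k) / real (\<Sum>i<N. x i)\<bar> > \<epsilon>})
          \<longlonglongrightarrow> 0"
proof (intro allI impI)
  fix \<epsilon> :: real assume \<epsilon>: "0 < \<epsilon>"
  define b where "b = (min \<epsilon> 1)\<^sup>2 / 4"
  have "0 < b" using \<epsilon> by (simp add: b_def)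
  then have lim: "(\<lambda>N. 2 * real N ^ 5 * exp (- b * real N)) \<longlonglongrightarrow> 0"
    by real_asymp
  show "(\<lambda>N. real N ^ 2 / coal_prob (p N) N *
            measure_pmf.prob (cannings (p N) N)
              {(x, v). \<exists>k<N. \<bar>real (v k) / real N - real (x k) / real (\<Sum>i<N. x i)\<bar> > \<epsilon>})
          \<longlonglongrightarrow> 0"
    using scaled_deviation_prob_le[OF pos _ \<epsilon>] unfolding b_def
    by (intro tendsto_sandwich[OF eventually_sequentiallyI[of 2] eventually_sequentiallyI[of 2]
          tendsto_const lim[unfolded b_def]]) auto
qed

end
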